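(* Let $d\ge 1$ and $L\ge 1$ be integers and let $\Phi\in\mathbb{R}^{d\times d}$ be arbitrary. Consider the loss $$\mathcal{R}(W_1,\dots,W_L)=\tfrac12\|W_LW_{L-1}\cdots W_1-\Phi\|_F^2,\qquad W_l\in\mathbb{R}^{d\times d},$$ and the continuous-time gradient descent (gradient flow) $$\dot W_l(t)=-\nabla_l\mathcal{R}(t),\qquad l=1,\dots,L,\ t\ge 0,$$ started from the zero-asymmetric initialization $W_l(0)=I$ for $l=1,\dots,L-1$ and $W_L(0)=0$. Then $$\mathcal{R}(t)\le e^{-2t}\mathcal{R}(0)\qquad\text{for all } t\ge 0.$$
   Context: For $l_2\ge l_1$ write $W_{l_2:l_1}=W_{l_2}W_{l_2-1}\cdots W_{l_1}$, and an empty product (e.g. $W_{0:1}$ or $W_{L:L+1}$) is the identity matrix $I\in\mathbb{R}^{d\times d}$. The gradient of $\mathcal{R}$ with respect to $W_l$ is $\nabla_l\mathcal{R}=W_{L:l+1}^\intercal(W_{L:1}-\Phi)W_{l-1:1}^\intercal$. $\mathcal{R}(t)$ denotes $\mathcal{R}(W_1(t),\dots,W_L(t))$ and $\nabla_l\mathcal{R}(t)$ the gradient evaluated at $(W_1(t),\dots,W_L(t))$. $\|\cdot\|_F$ is the Frobenius norm. *)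

theory Defs
  imports "HOL-Analysis.Analysis"
begin

text \<open>Ordered product W_{hi:lo} = W hi ** W (hi-1) ** ... ** W lo; identity if hi < lo.\<close>
definition mprod :: "(nat \<Rightarrow> real^'n^'n) \<Rightarrow> nat \<Rightarrow> nat \<Rightarrow> real^'n^'n" where
  "mprod W hi lo = foldr (\<lambda>l A. W l ** A) (rev [lo..<Suc hi]) (mat 1)"

definition frob_sq :: "real^'n^'m \<Rightarrow> real" where
  "frob_sq A = (\<Sum>i\<in>UNIV. \<Sum>j\<in>UNIV. (A $ i $ j)^2)"

definition loss :: "nat \<Rightarrow> real^'n^'n \<Rightarrow> (nat \<Rightarrow> real^'n^'n) \<Rightarrow> real" where
  "loss L \<Phi> W = frob_sq (mprod W L 1 - \<Phi>) / 2"

definition grad :: "nat \<Rightarrow> real^'n^'n \<Rightarrow> (nat \<Rightarrow> real^'n^'n) \<Rightarrow> nat \<Rightarrow> real^'n^'n" where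
  "grad L \<Phi> W l = transpose (mprod W L (l+1)) ** (mprod W L 1 - \<Phi>) ** transpose (mprod W (l-1) 1)"

end

theory Submission
  imports Defs
begin

(* Along the gradient flow the differences W_{l+1}^T W_{l+1} - W_l W_l^T are conserved, because
   W_{l+1}^T grad_{l+1} = grad_l W_l^T makes their derivatives cancel. The zero-asymmetric
   initialization makes these differences 0 for l < L - 1 and -I for l = L - 1, so
   W_{L-1} W_{L-1}^T = W_L^T W_L + I and W_l W_l^T = W_{l+1}^T W_{l+1} below; descending from
   l = L - 1, every hidden factor W_l, and hence P = W_{L-1:1}, satisfies |P x| >= |x|.
   As grad_L = (W_{L:1} - Phi) P^T, this yields the Polyak-Lojasiewicz inequality
   2 R <= |grad_L|^2 <= sum_l |grad_l|^2, while dR/dt = - sum_l |grad_l|^2; the exponential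
   decay R(t) <= exp(-2t) R(0) follows by Gronwall's argument. *)

lemma bounded_bilinear_matrix_matrix_mult:
  "bounded_bilinear ((**) :: real^'n^'m \<Rightarrow> real^'p^'n \<Rightarrow> real^'p^'m)"
  unfolding bilinear_conv_bounded_bilinear[symmetric] bilinear_def
  by (auto intro!: linearI simp: vec_eq_iff matrix_matrix_mult_def sum_distrib_left
       algebra_simps sum.distrib)

lemma bounded_linear_transpose: "bounded_linear (transpose :: real^'n^'m \<Rightarrow> real^'m^'n)"
  unfolding linear_conv_bounded_linear[symmetric]
  by (auto intro!: linearI simp: vec_eq_iff transpose_def)

lemma transpose_uminus: "transpose (- A) = - transpose (A :: real^'n^'m)"
  by (simp add: vec_eq_iff transpose_def)

lemma inner_transpose: "inner (transpose A) (transpose B) = inner A (B :: real^'n^'m)"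
  unfolding inner_vec_def transpose_def by (simp add: inner_real_def) (rule sum.swap)

lemma inner_matrix_mult_right:
  fixes A :: "real^'p^'m" and X :: "real^'n^'m"
  shows "inner A (X ** C) = inner (A ** transpose C) X"
  unfolding inner_vec_def matrix_matrix_mult_def transpose_def
  by (simp add: inner_real_def sum_distrib_left sum_distrib_right mult_ac)
     (rule sum.cong[OF refl sum.swap])

lemma inner_matrix_mult_left:
  fixes A :: "real^'p^'m" and X :: "real^'p^'n"
  shows "inner A (B ** X) = inner (transpose B ** A) X"
proof -
  have "inner A (B ** X) = inner (transpose A) (transpose X ** transpose B)"
    by (simp add: inner_transpose flip: matrix_transpose_mul)
  also have "\<dots> = inner (transpose A ** B) (transpose X)"
    by (simp add: inner_matrix_mult_right)
  also have "\<dots> = inner (transpose B ** A) X"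
    using inner_transpose[of "transpose A ** B" "transpose X"] by (simp add: matrix_transpose_mul)
  finally show ?thesis .
qed

lemma frob_sq_eq_norm: "frob_sq A = (norm A)\<^sup>2"
  unfolding frob_sq_def norm_vec_def L2_set_def by (simp add: sum_nonneg)

lemma norm_matrix_vector_mult_sq:
  fixes M :: "real^'n^'m"
  shows "(norm (M *v x))\<^sup>2 = inner x ((transpose M ** M) *v x)"
  using dot_lmul_matrix[of "M *v x" M x]
  by (simp add: power2_norm_eq_inner inner_commute flip: matrix_vector_mul_assoc)

lemma mprod_empty: "hi < lo \<Longrightarrow> mprod W hi lo = mat 1"
  by (simp add: mprod_def)

lemma mprod_Suc: "lo \<le> Suc hi \<Longrightarrow> mprod W (Suc hi) lo = W (Suc hi) ** mprod W hi lo"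
  by (simp add: mprod_def)

lemma mprod_single: "mprod W l l = W l"
  by (simp add: mprod_def)

lemma mprod_split_lowest: "lo \<le> hi \<Longrightarrow> mprod W hi lo = mprod W hi (Suc lo) ** W lo"
proof (induction hi)
  case 0
  then show ?case by (simp add: mprod_single mprod_empty)
next
  case (Suc hi)
  show ?case
  proof (cases "lo = Suc hi")
    case True
    then show ?thesis by (simp add: mprod_single mprod_empty)
  next
    case False
    with Suc show ?thesis by (simp add: mprod_Suc matrix_mul_assoc)
  qed
qed

(* lo \<ge> 1 because l - 1 truncates: for lo = 0 the l = 0 term would get the factor V t 0 instead of mat 1. *)
lemma has_vector_derivative_mprod:
  fixes V :: "real \<Rightarrow> nat \<Rightarrow> real^'n^'n"
  assumes lo: "1 \<le> lo"
    and deriv: "\<And>l. lo \<le> l \<Longrightarrow> l \<le> hi \<Longrightarrow> ((\<lambda>s. V s l) has_vector_derivative V' l) (at t within S)"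
  shows "((\<lambda>s. mprod (V s) hi lo) has_vector_derivative
     (\<Sum>l\<in>{lo..hi}. mprod (V t) hi (Suc l) ** V' l ** mprod (V t) (l - 1) lo)) (at t within S)"
  using deriv
proof (induction hi)
  case 0
  then show ?case using lo by (simp add: mprod_empty)
next
  case (Suc hi)
  show ?case
  proof (cases "lo \<le> Suc hi")
    case False
    then show ?thesis by (simp add: mprod_empty)
  next
    case True
    let ?D = "\<lambda>h l. mprod (V t) h (Suc l) ** V' l ** mprod (V t) (l - 1) lo"
    have "((\<lambda>s. V s (Suc hi) ** mprod (V s) hi lo) has_vector_derivative
        V t (Suc hi) ** (\<Sum>l\<in>{lo..hi}. ?D hi l) + V' (Suc hi) ** mprod (V t) hi lo) (at t within S)"
      using Suc True
      by (intro bounded_bilinear.has_vector_derivative[OF bounded_bilinear_matrix_matrix_mult]) auto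
    moreover have "V t (Suc hi) ** (\<Sum>l\<in>{lo..hi}. ?D hi l) = (\<Sum>l\<in>{lo..hi}. ?D (Suc hi) l)"
      unfolding bounded_bilinear.sum_right[OF bounded_bilinear_matrix_matrix_mult]
      by (intro sum.cong) (auto simp: mprod_Suc matrix_mul_assoc)
    moreover have "(\<Sum>l\<in>{lo..Suc hi}. ?D (Suc hi) l)
        = (\<Sum>l\<in>{lo..hi}. ?D (Suc hi) l) + V' (Suc hi) ** mprod (V t) hi lo"
      using True by (simp add: atLeastAtMostSuc_conv mprod_empty add.commute)
    ultimately show ?thesis
      using True by (simp add: mprod_Suc)
  qed
qed

definition expanding :: "real^'n^'m \<Rightarrow> bool" where
  "expanding M \<longleftrightarrow> (\<forall>x. norm x \<le> norm (M *v x))"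

lemma expanding_mat_1: "expanding (mat 1)"
  by (simp add: expanding_def)

lemma expanding_mult: "expanding A \<Longrightarrow> expanding B \<Longrightarrow> expanding (A ** B)"
  unfolding expanding_def by (metis matrix_vector_mul_assoc order_trans)

lemma expanding_transpose:
  fixes M :: "real^'n^'n"
  assumes "expanding (transpose M)"
  shows "expanding M"
  unfolding expanding_def
proof
  fix y
  have "inj ((*v) (transpose M))"
    unfolding linear_injective_0[OF matrix_vector_mul_linear]
  proof (intro allI impI)
    fix x
    assume "transpose M *v x = 0"
    then show "x = 0"
      using assms unfolding expanding_def by (metis norm_le_zero_iff norm_zero)
  qed
  then obtain x where y: "y = transpose M *v x"
    using linear_injective_imp_surjective[OF matrix_vector_mul_linear] by blast
  have "norm x \<le> norm y"
    using assms y unfolding expanding_def by blast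
  have "norm y * norm y = inner y y"
    by (simp add: dot_square_norm power2_eq_square)
  also have "\<dots> = inner x (M *v y)"
    by (metis y dot_lmul_matrix transpose_matrix_vector)
  also have "\<dots> \<le> norm x * norm (M *v y)"
    by (rule norm_cauchy_schwarz)
  also have "\<dots> \<le> norm y * norm (M *v y)"
    using \<open>norm x \<le> norm y\<close> by (rule mult_right_mono) simp
  finally show "norm y \<le> norm (M *v y)"
    by (cases "y = 0") simp_all
qed

lemma norm_transpose_matrix_vector_mult_sq:
  fixes M :: "real^'n^'m"
  shows "(norm (transpose M *v x))\<^sup>2 = inner x ((M ** transpose M) *v x)"
  using norm_matrix_vector_mult_sq[of "transpose M" x] by (simp only: transpose_transpose)

lemma expanding_if_gram_eq_plus_id:
  fixes M :: "real^'n^'n" and N :: "real^'n^'m"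
  assumes "M ** transpose M = transpose N ** N + mat 1"
  shows "expanding M"
proof (rule expanding_transpose, unfold expanding_def, intro allI)
  fix x
  have "(norm (transpose M *v x))\<^sup>2 = (norm (N *v x))\<^sup>2 + (norm x)\<^sup>2"
    unfolding norm_transpose_matrix_vector_mult_sq[of M] norm_matrix_vector_mult_sq[of N] assms
    by (simp only: matrix_vector_mult_add_rdistrib inner_add_right matrix_vector_mul_lid power2_norm_eq_inner)
  then have "(norm x)\<^sup>2 \<le> (norm (transpose M *v x))\<^sup>2"
    by (simp only: le_add_same_cancel2 zero_le_power2)
  then show "norm x \<le> norm (transpose M *v x)"
    by (rule power2_le_imp_le) (rule norm_ge_zero)
qed

lemma expanding_if_gram_eq:
  fixes M :: "real^'n^'n" and N :: "real^'n^'m"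
  assumes "M ** transpose M = transpose N ** N" and "expanding N"
  shows "expanding M"
proof (rule expanding_transpose, unfold expanding_def, intro allI)
  fix x
  have "(norm (transpose M *v x))\<^sup>2 = (norm (N *v x))\<^sup>2"
    unfolding norm_transpose_matrix_vector_mult_sq[of M] norm_matrix_vector_mult_sq[of N] assms(1) ..
  then have "norm (transpose M *v x) = norm (N *v x)"
    by (rule power2_eq_imp_eq) simp_all
  then show "norm x \<le> norm (transpose M *v x)"
    using assms(2) unfolding expanding_def by metis
qed

lemma norm_le_norm_matrix_mult_transpose:
  fixes E :: "real^'n^'m" and P :: "real^'n^'p"
  assumes "expanding P"
  shows "norm E \<le> norm (E ** transpose P)"
proof -
  have "(E ** transpose P) $ i = P *v (E $ i)" for i
    by (simp add: vec_eq_iff matrix_matrix_mult_def matrix_vector_mult_def transpose_def mult.commute)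
  then show ?thesis
    using assms unfolding norm_vec_def[of E] norm_vec_def[of "E ** transpose P"] expanding_def
    by (auto intro: L2_set_mono)
qed

lemma has_vector_derivative_transpose_mult_self:
  fixes V :: "real \<Rightarrow> real^'n^'m"
  assumes "(V has_vector_derivative V') (at t within S)"
  shows "((\<lambda>s. transpose (V s) ** V s) has_vector_derivative
      transpose (V t) ** V' + transpose V' ** V t) (at t within S)"
  by (rule bounded_bilinear.has_vector_derivative[OF bounded_bilinear_matrix_matrix_mult
        bounded_linear.has_vector_derivative[OF bounded_linear_transpose assms] assms])

lemma has_vector_derivative_mult_transpose_self:
  fixes V :: "real \<Rightarrow> real^'n^'m"
  assumes "(V has_vector_derivative V') (at t within S)"
  shows "((\<lambda>s. V s ** transpose (V s)) has_vector_derivative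
      V t ** transpose V' + V' ** transpose (V t)) (at t within S)"
  by (rule bounded_bilinear.has_vector_derivative[OF bounded_bilinear_matrix_matrix_mult
        assms bounded_linear.has_vector_derivative[OF bounded_linear_transpose assms]])

lemma transpose_mult_grad_Suc:
  assumes "1 \<le> l" "l < L"
  shows "transpose (W (Suc l)) ** grad L \<Phi> W (Suc l) = grad L \<Phi> W l ** transpose (W l)"
proof -
  have top: "transpose (W (Suc l)) ** transpose (mprod W L (Suc (Suc l))) = transpose (mprod W L (Suc l))"
    using assms by (simp add: mprod_split_lowest[of "Suc l" L] matrix_transpose_mul)
  have bottom: "transpose (mprod W (l - 1) 1) ** transpose (W l) = transpose (mprod W l 1)"
    using assms mprod_Suc[of 1 "l - 1" W] by (simp add: matrix_transpose_mul)
  have "transpose (W (Suc l)) ** grad L \<Phi> W (Suc l)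
      = (transpose (W (Suc l)) ** transpose (mprod W L (Suc (Suc l))))
          ** (mprod W L 1 - \<Phi>) ** transpose (mprod W l 1)"
    by (simp add: grad_def matrix_mul_assoc)
  also have "\<dots> = transpose (mprod W L (Suc l)) ** (mprod W L 1 - \<Phi>)
          ** (transpose (mprod W (l - 1) 1) ** transpose (W l))"
    unfolding top bottom ..
  also have "\<dots> = grad L \<Phi> W l ** transpose (W l)"
    by (simp add: grad_def matrix_mul_assoc)
  finally show ?thesis .
qed

lemma inner_residual_eq_inner_grad:
  "inner (mprod W L 1 - \<Phi>) (mprod W L (Suc l) ** G ** mprod W (l - 1) 1) = inner (grad L \<Phi> W l) G"
  unfolding inner_matrix_mult_right[of _ "mprod W L (Suc l) ** G"]
    inner_matrix_mult_left[of _ "mprod W L (Suc l)"] grad_def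
  by (simp add: matrix_mul_assoc)

locale deep_linear_gradient_flow =
  fixes L :: nat and \<Phi> :: "real^'n^'n" and W :: "real \<Rightarrow> nat \<Rightarrow> real^'n^'n"
  assumes flow: "\<And>t l. t \<ge> 0 \<Longrightarrow> 1 \<le> l \<Longrightarrow> l \<le> L \<Longrightarrow>
    ((\<lambda>s. W s l) has_vector_derivative (- grad L \<Phi> (W t) l)) (at t within {0..})"
begin

lemma gram_difference_constant:
  assumes l: "1 \<le> l" "l < L" and t: "0 \<le> t"
  shows "transpose (W t (Suc l)) ** W t (Suc l) - W t l ** transpose (W t l)
    = transpose (W 0 (Suc l)) ** W 0 (Suc l) - W 0 l ** transpose (W 0 l)"
proof -
  let ?f = "\<lambda>s. transpose (W s (Suc l)) ** W s (Suc l) - W s l ** transpose (W s l)"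
  have "(?f has_derivative (\<lambda>_. 0)) (at s within {0..})" if s: "s \<in> {0..}" for s
  proof -
    define X where "X = transpose (W s (Suc l)) ** grad L \<Phi> (W s) (Suc l)"
    have X': "grad L \<Phi> (W s) l ** transpose (W s l) = X"
      unfolding X_def by (rule transpose_mult_grad_Suc[OF l, symmetric])
    have "transpose (grad L \<Phi> (W s) (Suc l)) ** W s (Suc l) = transpose X"
      by (simp add: X_def matrix_transpose_mul)
    moreover have "W s l ** transpose (grad L \<Phi> (W s) l) = transpose X"
      by (simp add: matrix_transpose_mul flip: X')
    ultimately have "(transpose (W s (Suc l)) ** - grad L \<Phi> (W s) (Suc l)
          + transpose (- grad L \<Phi> (W s) (Suc l)) ** W s (Suc l))
        - (W s l ** transpose (- grad L \<Phi> (W s) l) + - grad L \<Phi> (W s) l ** transpose (W s l)) = 0"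
      using X' by (simp add: X_def transpose_uminus
          bounded_bilinear.minus_left[OF bounded_bilinear_matrix_matrix_mult]
          bounded_bilinear.minus_right[OF bounded_bilinear_matrix_matrix_mult])
    then have "(?f has_vector_derivative 0) (at s within {0..})"
      using has_vector_derivative_diff[OF
          has_vector_derivative_transpose_mult_self[OF flow[of s "Suc l"]]
          has_vector_derivative_mult_transpose_self[OF flow[of s l]]] s l
      by simp
    then show ?thesis
      by (simp add: has_vector_derivative_def)
  qed
  then obtain c where "\<forall>s\<in>{0..}. ?f s = c"
    using has_derivative_zero_constant[of "{0::real..}" ?f] by auto
  then show ?thesis
    using t by simp
qed

lemma has_real_derivative_loss:
  assumes t: "0 \<le> t"
  shows "((\<lambda>s. loss L \<Phi> (W s)) has_real_derivative
      - (\<Sum>l=1..L. (norm (grad L \<Phi> (W t) l))\<^sup>2)) (at t within {0..})"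
proof -
  let ?E = "\<lambda>s. mprod (W s) L 1 - \<Phi>"
  let ?E' = "\<Sum>l=1..L. mprod (W t) L (Suc l) ** (- grad L \<Phi> (W t) l) ** mprod (W t) (l - 1) 1"
  have "(?E has_vector_derivative ?E') (at t within {0..})"
    using has_vector_derivative_mprod[of 1 L W "\<lambda>l. - grad L \<Phi> (W t) l"] flow t
    by (auto intro!: derivative_eq_intros)
  then have "((\<lambda>s. inner (?E s) (?E s) / 2) has_vector_derivative
      (inner (?E t) ?E' + inner ?E' (?E t)) / 2) (at t within {0..})"
    by (auto intro!: derivative_eq_intros
        bounded_bilinear.has_vector_derivative[OF bounded_bilinear_inner])
  moreover have "inner (?E t) ?E' = - (\<Sum>l=1..L. (norm (grad L \<Phi> (W t) l))\<^sup>2)"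
    unfolding inner_sum_right inner_residual_eq_inner_grad inner_minus_right power2_norm_eq_inner
    by (rule sum_negf)
  ultimately show ?thesis
    by (simp add: loss_def frob_sq_eq_norm power2_norm_eq_inner inner_commute
        has_real_derivative_iff_has_vector_derivative)
qed

end

locale zero_asymmetric_gradient_flow = deep_linear_gradient_flow +
  assumes depth: "1 \<le> L"
    and init_id: "\<And>l. 1 \<le> l \<Longrightarrow> l < L \<Longrightarrow> W 0 l = mat 1"
    and init_zero: "W 0 L = 0"
begin

lemma expanding_layer:
  assumes t: "0 \<le> t" and l: "1 \<le> l" "l < L"
  shows "expanding (W t l)"
proof -
  have "l \<le> L - 1"
    using l by simp
  then show ?thesis
  proof (induction rule: inc_induct)
    case base
    have "transpose (W t L) ** W t L - W t (L - 1) ** transpose (W t (L - 1)) = - mat 1"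
      using gram_difference_constant[of "L - 1" t] init_id[of "L - 1"] init_zero l t by simp
    then have "W t (L - 1) ** transpose (W t (L - 1)) = transpose (W t L) ** W t L + mat 1"
      by (simp add: algebra_simps)
    then show ?case
      by (rule expanding_if_gram_eq_plus_id)
  next
    case (step n)
    have "W t n ** transpose (W t n) = transpose (W t (Suc n)) ** W t (Suc n)"
      using gram_difference_constant[of n t] init_id[of n] init_id[of "Suc n"] step.hyps l t by simp
    then show ?case
      using step.IH by (rule expanding_if_gram_eq)
  qed
qed

lemma expanding_mprod_hidden_layers:
  assumes t: "0 \<le> t"
  shows "expanding (mprod (W t) (L - 1) 1)"
proof -
  have "expanding (mprod (W t) k 1)" if "k \<le> L - 1" for k
    using that
  proof (induction k)
    case 0
    then show ?case by (simp add: mprod_empty expanding_mat_1)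
  next
    case (Suc k)
    then show ?case
      by (simp add: mprod_Suc expanding_mult expanding_layer t)
  qed
  then show ?thesis by simp
qed

lemma polyak_lojasiewicz:
  assumes t: "0 \<le> t"
  shows "2 * loss L \<Phi> (W t) \<le> (\<Sum>l=1..L. (norm (grad L \<Phi> (W t) l))\<^sup>2)"
proof -
  have "grad L \<Phi> (W t) L = (mprod (W t) L 1 - \<Phi>) ** transpose (mprod (W t) (L - 1) 1)"
    by (simp add: grad_def mprod_empty)
  then have "2 * loss L \<Phi> (W t) \<le> (norm (grad L \<Phi> (W t) L))\<^sup>2"
    unfolding loss_def frob_sq_eq_norm
    using norm_le_norm_matrix_mult_transpose[OF expanding_mprod_hidden_layers[OF t]]
    by (simp add: power_mono)
  also have "\<dots> \<le> (\<Sum>l=1..L. (norm (grad L \<Phi> (W t) l))\<^sup>2)"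
    using depth by (intro member_le_sum) auto
  finally show ?thesis .
qed

end

lemma exp_decay_if_derivative_le:
  fixes f f' :: "real \<Rightarrow> real"
  assumes deriv: "\<And>s. 0 \<le> s \<Longrightarrow> (f has_real_derivative f' s) (at s within {0..})"
    and bound: "\<And>s. 0 \<le> s \<Longrightarrow> f' s \<le> - c * f s"
    and t: "0 \<le> t"
  shows "f t \<le> exp (- c * t) * f 0"
proof -
  define h where "h s = exp (c * s) * f s" for s
  define h' where "h' s = exp (c * s) * (c * f s + f' s)" for s
  have "(h has_real_derivative h' s) (at s within {0..t})" if "s \<in> {0..t}" for s
    unfolding h_def[abs_def] h'_def
    using that by (auto intro!: derivative_eq_intros has_field_derivative_subset[OF deriv]
        simp: algebra_simps)
  then obtain s where s: "s \<in> {0..t}" "h t - h 0 = h' s * (t - 0)"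
    using mvt_very_simple[of 0 t h "\<lambda>s. (*) (h' s)"] t
    unfolding has_field_derivative_def by auto
  have "h' s \<le> 0"
    using bound[of s] s by (simp add: h'_def mult_nonneg_nonpos)
  then have "h' s * t \<le> 0"
    using t by (rule mult_nonpos_nonneg)
  then have "exp (c * t) * f t \<le> f 0"
    using s by (simp add: h_def)
  then have "exp (- c * t) * (exp (c * t) * f t) \<le> exp (- c * t) * f 0"
    by (simp add: mult_left_mono)
  then show ?thesis
    by (simp add: mult.assoc[symmetric] flip: exp_add)
qed

theorem theorem1:
  fixes L :: nat and \<Phi> :: "real^'n^'n" and W :: "real \<Rightarrow> nat \<Rightarrow> real^'n^'n"
  assumes L: "L \<ge> 1"
    and flow: "\<And>t l. t \<ge> 0 \<Longrightarrow> 1 \<le> l \<Longrightarrow> l \<le> L \<Longrightarrow>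
               ((\<lambda>s. W s l) has_vector_derivative (- grad L \<Phi> (W t) l)) (at t within {0..})"
    and init_id: "\<And>l. 1 \<le> l \<Longrightarrow> l < L \<Longrightarrow> W 0 l = mat 1"
    and init_zero: "W 0 L = 0"
  shows "\<forall>t\<ge>0. loss L \<Phi> (W t) \<le> exp (-2 * t) * loss L \<Phi> (W 0)"
proof -
  interpret zero_asymmetric_gradient_flow L \<Phi> W
    using assms by unfold_locales
  have "loss L \<Phi> (W t) \<le> exp (-2 * t) * loss L \<Phi> (W 0)" if "0 \<le> t" for t
  proof (rule exp_decay_if_derivative_le)
    fix s :: real
    assume "0 \<le> s"
    then show "((\<lambda>s. loss L \<Phi> (W s)) has_real_derivative
        - (\<Sum>l=1..L. (norm (grad L \<Phi> (W s) l))\<^sup>2)) (at s within {0..})"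
      by (rule has_real_derivative_loss)
    show "- (\<Sum>l=1..L. (norm (grad L \<Phi> (W s) l))\<^sup>2) \<le> - 2 * loss L \<Phi> (W s)"
      using polyak_lojasiewicz[OF \<open>0 \<le> s\<close>] by simp
  qed (rule that)
  then show ?thesis
    by simp
qed

end
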